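(* Let $p\in\mathbb{N}$ and let $f$ be analytic and $p$-symmetric in the unit disk $\mathbb{D}=\{z\in\mathbb{C}:|z|<1\}$, i.e. $f(z)=z\sum_{k=0}^{\infty}a_{pk+1}z^{pk}$, with $|f(z)|\le 1$ for all $z\in\mathbb{D}$. Then $$M_f(r)=\sum_{k=0}^{\infty}|a_{pk+1}|r^{pk+1}\le 1\quad\text{for all } 0\le r\le r_p,$$ where $r_p$ is the maximal positive root in $(0,1)$ of the equation $$-6r^{p-1}+r^{2(p-1)}+8r^{2p}+1=0.$$ Moreover, the radius $r_p$ is attained by the extremal function $f(z)=z(z^p-a)/(1-az^p)$ with $$a=\left(1-\frac{\sqrt{1-r_p^{2p}}}{\sqrt{2}}\right)\frac{1}{r_p^{p}},$$ in the sense that the largest $r$ for which $M_f(r)\le 1$ holds for this function equals $r_p$.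
   Context: For $f(z)=\sum_{n\ge0}a_nz^n$ analytic in $\mathbb{D}$, $M_f(r)=\sum_{n\ge 0}|a_n|r^n$ (the majorant series). A function $f$ analytic in $\mathbb{D}$ is called $p$-symmetric if it has the form $f(z)=z\sum_{k=0}^\infty a_{pk+1}z^{pk}$. *)

theory Defs
  imports "HOL-Analysis.Analysis"
begin

definition majorant :: "(nat \<Rightarrow> complex) \<Rightarrow> real \<Rightarrow> real" where
  "majorant a r = (\<Sum>n. norm (a n) * r ^ n)"

definition p_symmetric_coeffs :: "nat \<Rightarrow> (nat \<Rightarrow> complex) \<Rightarrow> bool" where
  "p_symmetric_coeffs p a \<longleftrightarrow> (\<forall>n. a n \<noteq> 0 \<longrightarrow> (\<exists>k. n = p * k + 1))"

definition bohr_poly :: "nat \<Rightarrow> real \<Rightarrow> real" where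
  "bohr_poly p r = - 6 * r ^ (p - 1) + r ^ (2 * (p - 1)) + 8 * r ^ (2 * p) + 1"

definition bohr_radius :: "nat \<Rightarrow> real" where
  "bohr_radius p = (GREATEST r. 0 < r \<and> r < 1 \<and> bohr_poly p r = 0)"

end

(* A p-symmetric f factors as f z = z h (z^p) with |h| \<le> 1 (Schwarz's lemma), so
   M_f(r) = r M_h(r^p). Let b_k be the Taylor coefficients of h, A = |b_0| and
   T(\<rho>) = \<Sum>_{k\<ge>1} |b_k|\<^sup>2 \<rho>^(2k). Parseval's inequality on the circle |w| = \<rho>, applied to h
   and to the Schwarz--Pick estimate |h w - b_0| \<le> \<rho> |1 - cnj b_0 h w|, gives
     A\<^sup>2 + T(\<rho>) \<le> 1   and   T(\<rho>) \<le> \<rho>\<^sup>2 ((1 - A\<^sup>2)\<^sup>2 + A\<^sup>2 T(\<rho>)).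
   By Cauchy--Schwarz, M_h(x) - A is then at most x (1 - A\<^sup>2) / (1 - A x) if x < A, and at most
   x sqrt (1 - A\<^sup>2) / sqrt (1 - x\<^sup>2) if A \<le> x. For r = r_p and x = r^p the equation defining r_p
   makes r times either bound at most 1. The first bound is attained by the Blaschke factor
   (w - \<alpha>) / (1 - \<alpha> w), which yields the extremal function. *)

theory Submission
  imports Defs "HOL-Complex_Analysis.Complex_Analysis"
begin

section \<open>Schwarz--Pick estimates\<close>

lemma norm_diff_le_norm_one_minus_cnj_mult:
  fixes a w :: complex
  assumes "norm a \<le> 1" "norm w \<le> 1"
  shows "norm (w - a) \<le> norm (1 - cnj a * w)"
proof -
  have "complex_of_real ((norm (1 - cnj a * w))^2 - (norm (w - a))^2)
      = of_real ((1 - (norm a)^2) * (1 - (norm w)^2))"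
    unfolding of_real_diff of_real_mult complex_norm_square of_real_1
    by (simp add: algebra_simps)
  then have "(norm (1 - cnj a * w))^2 - (norm (w - a))^2 = (1 - (norm a)^2) * (1 - (norm w)^2)"
    by (simp only: of_real_eq_iff)
  moreover have "0 \<le> (1 - (norm a)^2) * (1 - (norm w)^2)"
    using assms by (intro mult_nonneg_nonneg) (auto simp: power_le_one)
  ultimately have "(norm (w - a))^2 \<le> (norm (1 - cnj a * w))^2" by linarith
  then show ?thesis by (rule power2_le_imp_le) simp
qed

(* The library version needs |f| < 1 on the disc; apply it to \<tau> f for every \<tau> < 1. *)
lemma Schwarz_Lemma_le:
  fixes f :: "complex \<Rightarrow> complex"
  assumes holf: "f holomorphic_on ball 0 1" and f0: "f 0 = 0"
    and bd: "\<And>z. norm z < 1 \<Longrightarrow> norm (f z) \<le> 1" and z: "norm z < 1"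
  shows "norm (f z) \<le> norm z"
proof (rule field_le_mult_one_interval)
  fix \<tau> :: real assume \<tau>: "0 < \<tau>" "\<tau> < 1"
  have lt: "norm (of_real \<tau> * f w) < 1" if "norm w < 1" for w
  proof -
    have "norm (of_real \<tau> * f w) = \<tau> * norm (f w)" using \<tau> by (simp add: norm_mult)
    also have "\<dots> \<le> \<tau>" using bd[OF that] \<tau> by (simp add: mult_left_le_one_le)
    finally show ?thesis using \<tau> by simp
  qed
  have hol: "(\<lambda>z. of_real \<tau> * f z) holomorphic_on ball 0 1"
    using holf by (intro holomorphic_intros)
  have "norm (of_real \<tau> * f z) \<le> norm z"
    using Schwarz_Lemma'[of "\<lambda>z. of_real \<tau> * f z", OF hol _ lt] f0 z by auto
  moreover have "norm (of_real \<tau> * f z) = \<tau> * norm (f z)" using \<tau> by (simp add: norm_mult)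
  ultimately show "\<tau> * norm (f z) \<le> norm z" by linarith
qed

section \<open>Parseval's inequality on a circle\<close>

lemma sum_roots_of_unity_power:
  assumes n: "n > 0" and m: "\<bar>m\<bar> < int n"
  shows "(\<Sum>j<n. exp (2 * pi * \<i> * of_int m * of_nat j / of_nat n)) = (if m = 0 then of_nat n else 0)"
proof (cases "m = 0")
  case False
  define d where "d = exp (2 * pi * \<i> * of_int m / of_nat n)"
  have pow: "exp (2 * pi * \<i> * of_int m * of_nat j / of_nat n) = d ^ j" for j :: nat
    unfolding d_def exp_of_nat_mult[symmetric] by (simp add: mult_ac)
  have "d ^ n = exp (2 * of_int m * pi * \<i>)"
    unfolding d_def exp_of_nat_mult[symmetric] using n by (simp add: field_simps)
  also have "\<dots> = 1" by (rule exp_integer_2pi) simp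
  finally have dn: "d ^ n = 1" .
  have "d \<noteq> 1"
  proof
    assume "d = 1"
    then obtain k :: int where "Im (2 * pi * \<i> * of_int m / of_nat n) = of_int (2 * k) * pi"
      unfolding d_def exp_eq_1 by blast
    then have "real_of_int m = of_int k * of_nat n" using n by (simp add: field_simps)
    then have mk: "m = k * int n" by (metis of_int_eq_iff of_int_mult of_int_of_nat_eq)
    then have "k \<noteq> 0" using False by simp
    then have "1 * int n \<le> \<bar>k\<bar> * int n" by (intro mult_right_mono) auto
    then show False using m mk by (simp add: abs_mult)
  qed
  have "(\<Sum>j<n. exp (2 * pi * \<i> * of_int m * of_nat j / of_nat n)) = (\<Sum>j<n. d ^ j)"
    by (simp only: pow)
  also have "\<dots> = 0" using \<open>d \<noteq> 1\<close> dn by (simp add: sum_gp_strict)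
  finally show ?thesis using False by simp
next
  case True
  then show ?thesis by simp
qed

lemma roots_of_unity_orthogonal:
  assumes n: "n > 0" and "k < n" "l < n"
  shows "(\<Sum>j<n. exp (2 * pi * \<i> * of_nat k * of_nat j / of_nat n)
                  * cnj (exp (2 * pi * \<i> * of_nat l * of_nat j / of_nat n)))
         = (if k = l then of_nat n else 0)"
proof -
  have "exp (2 * pi * \<i> * of_nat k * of_nat j / of_nat n) * cnj (exp (2 * pi * \<i> * of_nat l * of_nat j / of_nat n))
      = exp (2 * pi * \<i> * of_int (int k - int l) * of_nat j / of_nat n)" for j
    by (simp add: exp_cnj exp_add[symmetric] diff_divide_distrib algebra_simps)
  moreover have "\<bar>int k - int l\<bar> < int n" using assms by simp
  ultimately show ?thesis using sum_roots_of_unity_power[OF n, of "int k - int l"] by simp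
qed

lemma discrete_parseval:
  fixes c :: "nat \<Rightarrow> complex" and \<rho> :: real
  assumes n: "n > 0"
  shows "(\<Sum>j<n. (norm (\<Sum>k<n. c k * (of_real \<rho> * exp (2 * pi * \<i> * of_nat j / of_nat n)) ^ k))^2)
         = of_nat n * (\<Sum>k<n. (norm (c k))^2 * \<rho>^(2*k))"
proof -
  define W where "W = (\<lambda>j k::nat. exp (2 * pi * \<i> * of_nat k * of_nat j / of_nat n))"
  define P where "P = (\<lambda>j. \<Sum>k<n. c k * of_real (\<rho>^k) * W j k)"
  have "(of_real \<rho> * exp (2 * pi * \<i> * of_nat j / of_nat n)) ^ k = of_real (\<rho>^k) * W j k" for j k
    unfolding W_def power_mult_distrib exp_of_nat_mult[symmetric] by (simp add: mult_ac)
  then have P: "(\<Sum>k<n. c k * (of_real \<rho> * exp (2 * pi * \<i> * of_nat j / of_nat n)) ^ k) = P j" for j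
    unfolding P_def by (simp add: mult.assoc)
  have "complex_of_real (\<Sum>j<n. (norm (P j))^2) = (\<Sum>j<n. P j * cnj (P j))"
    by (simp only: of_real_sum complex_norm_square)
  also have "\<dots> = (\<Sum>j<n. \<Sum>k<n. \<Sum>l<n. c k * cnj (c l) * of_real (\<rho>^k * \<rho>^l) * (W j k * cnj (W j l)))"
    unfolding P_def by (simp add: sum_product cnj_sum mult_ac)
  also have "\<dots> = (\<Sum>k<n. \<Sum>l<n. c k * cnj (c l) * of_real (\<rho>^k * \<rho>^l) * (\<Sum>j<n. W j k * cnj (W j l)))"
    by (subst sum.swap, rule sum.cong[OF refl], subst sum.swap) (simp add: sum_distrib_left)
  also have "\<dots> = (\<Sum>k<n. c k * cnj (c k) * of_real (\<rho>^k * \<rho>^k) * of_nat n)"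
  proof -
    have inner: "(\<Sum>j<n. W j k * cnj (W j l)) = (if k = l then of_nat n else 0)"
      if "k < n" "l < n" for k l
      unfolding W_def by (rule roots_of_unity_orthogonal[OF n that])
    show ?thesis by (simp add: inner if_distrib cong: if_cong)
  qed
  also have "\<dots> = (\<Sum>k<n. of_real ((norm (c k))^2 * \<rho>^(2*k)) * of_nat n)"
    by (simp only: complex_norm_square power_add[symmetric] mult_2 of_real_mult)
  also have "\<dots> = of_real (of_nat n * (\<Sum>k<n. (norm (c k))^2 * \<rho>^(2*k)))"
    by (simp add: sum_distrib_left mult_ac)
  finally show ?thesis unfolding P by (simp only: of_real_eq_iff)
qed

lemma summable_norm_sq_powser:
  fixes e :: "nat \<Rightarrow> 'a::real_normed_vector"
  assumes "0 \<le> \<rho>" "summable (\<lambda>k. norm (e k) * \<rho>^k)"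
  shows "summable (\<lambda>k. (norm (e k))^2 * \<rho>^(2*k))"
proof -
  define u where "u = (\<lambda>k. norm (e k) * \<rho>^k)"
  have u0: "0 \<le> u k" for k unfolding u_def using assms by simp
  have "u k \<le> suminf u" for k
    using sum_le_suminf[of u "{k}"] assms u0 unfolding u_def by simp
  then have "u k * u k \<le> suminf u * u k" for k using u0 by (simp add: mult_right_mono)
  moreover have "norm ((norm (e k))^2 * \<rho>^(2*k)) = u k * u k" for k
    using assms unfolding u_def by (simp add: power_mult power2_eq_square mult_ac)
  ultimately have "norm ((norm (e k))^2 * \<rho>^(2*k)) \<le> suminf u * u k" for k by simp
  moreover have "summable (\<lambda>k. suminf u * u k)" using assms unfolding u_def by simp
  ultimately show ?thesis by (rule summable_comparison_test'[rotated])
qed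

lemma suminf_eq_head_plus_tail:
  fixes f :: "nat \<Rightarrow> 'a::real_normed_vector"
  assumes "summable f"
  shows "suminf f = f 0 + (\<Sum>k. if k = 0 then 0 else f k)"
proof -
  have "(\<lambda>k. f k - (if k = 0 then f k else 0)) sums (suminf f - f 0)"
    using sums_diff[OF summable_sums[OF assms] sums_single[of 0 f]] by simp
  moreover have "(\<lambda>k. f k - (if k = 0 then f k else 0)) = (\<lambda>k. if k = 0 then 0 else f k)" by auto
  ultimately show ?thesis by (simp add: sums_iff)
qed

lemma norm_powser_tail_le:
  fixes e :: "nat \<Rightarrow> 'a::{real_normed_div_algebra,banach}"
  assumes se: "summable (\<lambda>k. norm (e k) * \<rho>^k)" and w: "norm w \<le> \<rho>"
  shows "norm ((\<Sum>k. e k * w^k) - (\<Sum>k<n. e k * w^k))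
         \<le> (\<Sum>k. norm (e k) * \<rho>^k) - (\<Sum>k<n. norm (e k) * \<rho>^k)"
proof -
  have bnd: "norm (e k * w^k) \<le> norm (e k) * \<rho>^k" for k
    using w by (simp add: norm_mult norm_power mult_left_mono power_mono)
  have sew: "summable (\<lambda>k. e k * w^k)"
    by (rule summable_comparison_test'[OF se]) (use bnd in auto)
  have "(\<Sum>k. e k * w^k) - (\<Sum>k<n. e k * w^k) = (\<Sum>k. e (k+n) * w^(k+n))"
    using suminf_split_initial_segment[OF sew, of n] by simp
  also have "norm \<dots> \<le> (\<Sum>k. norm (e (k+n)) * \<rho>^(k+n))"
    by (rule norm_suminf_le)
      (use bnd se in \<open>auto simp: summable_iff_shift[where f="\<lambda>k. norm (e k) * \<rho>^k"]\<close>)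
  also have "\<dots> = (\<Sum>k. norm (e k) * \<rho>^k) - (\<Sum>k<n. norm (e k) * \<rho>^k)"
    using suminf_split_initial_segment[OF se, of n] by simp
  finally show ?thesis .
qed

lemma norm_sq_le_of_perturbation:
  fixes E D E' D' :: "'a::real_normed_vector"
  assumes "norm E \<le> norm D" "norm (E - E') \<le> \<delta>" "norm (D - D') \<le> \<delta>'" "norm D' \<le> K"
  shows "(norm E')^2 \<le> (norm D')^2 + (2 * (\<delta> + \<delta>') * K + (\<delta> + \<delta>')^2)"
proof -
  have "0 \<le> \<delta> + \<delta>'" using assms(2,3) norm_ge_zero[of "E - E'"] norm_ge_zero[of "D - D'"] by linarith
  have "norm E' \<le> norm D' + (\<delta> + \<delta>')"
    using assms(1-3) norm_triangle_ineq2[of D D'] norm_triangle_ineq2[of E' E] norm_minus_commute[of E E']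
    by linarith
  then have "(norm E')^2 \<le> (norm D' + (\<delta> + \<delta>'))^2" by (intro power_mono) auto
  also have "\<dots> = (norm D')^2 + 2 * (\<delta> + \<delta>') * norm D' + (\<delta> + \<delta>')^2"
    by (simp add: power2_eq_square algebra_simps)
  also have "\<dots> \<le> (norm D')^2 + (2 * (\<delta> + \<delta>') * K + (\<delta> + \<delta>')^2)"
    using assms(4) \<open>0 \<le> \<delta> + \<delta>'\<close> by (simp add: mult_left_mono)
  finally show ?thesis .
qed

lemma partial_norm_sq_le_of_circle_bound:
  fixes e d :: "nat \<Rightarrow> complex"
  assumes n: "n > 0" and \<rho>: "0 \<le> \<rho>"
    and le: "\<And>w. norm w = \<rho> \<Longrightarrow> (norm (\<Sum>k<n. e k * w^k))^2 \<le> (norm (\<Sum>k<n. d k * w^k))^2 + c"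
  shows "(\<Sum>k<n. (norm (e k))^2 * \<rho>^(2*k)) \<le> (\<Sum>k<n. (norm (d k))^2 * \<rho>^(2*k)) + c"
proof -
  define w where "w j = of_real \<rho> * exp (2 * pi * \<i> * of_nat j / of_nat n)" for j :: nat
  have nw: "norm (w j) = \<rho>" for j unfolding w_def using \<rho> by (simp add: norm_mult norm_exp_eq_Re)
  have "of_nat n * (\<Sum>k<n. (norm (e k))^2 * \<rho>^(2*k)) = (\<Sum>j<n. (norm (\<Sum>k<n. e k * w j ^ k))^2)"
    unfolding w_def using discrete_parseval[OF n, of e \<rho>] by simp
  also have "\<dots> \<le> (\<Sum>j<n. (norm (\<Sum>k<n. d k * w j ^ k))^2 + c)"
    by (rule sum_mono) (rule le[OF nw])
  also have "\<dots> = of_nat n * ((\<Sum>k<n. (norm (d k))^2 * \<rho>^(2*k)) + c)"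
    unfolding w_def using discrete_parseval[OF n, of d \<rho>] by (simp add: sum.distrib algebra_simps)
  finally show ?thesis using n by simp
qed

(* Compare the truncated series at the n-th roots of unity on the circle by discrete Parseval;
   the tails vanish as n grows. *)
lemma powser_circle_norm_sq_le:
  fixes e d :: "nat \<Rightarrow> complex"
  assumes \<rho>: "0 < \<rho>"
    and se: "summable (\<lambda>k. norm (e k) * \<rho>^k)" and sd: "summable (\<lambda>k. norm (d k) * \<rho>^k)"
    and le: "\<And>w. norm w = \<rho> \<Longrightarrow> norm (\<Sum>k. e k * w^k) \<le> norm (\<Sum>k. d k * w^k)"
  shows "(\<Sum>k. (norm (e k))^2 * \<rho>^(2*k)) \<le> (\<Sum>k. (norm (d k))^2 * \<rho>^(2*k))"
proof -
  define tail where "tail c n = (\<Sum>k. norm (c k) * \<rho>^k) - (\<Sum>k<n. norm (c k) * \<rho>^k)"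
    for c :: "nat \<Rightarrow> complex" and n
  define \<eta> where "\<eta> n = tail e n + tail d n" for n
  define K where "K = (\<Sum>k. norm (d k) * \<rho>^k)"
  have tail_lim: "tail c \<longlonglongrightarrow> 0" if "summable (\<lambda>k. norm (c k) * \<rho>^k)" for c
    using tendsto_diff[OF tendsto_const summable_LIMSEQ[OF that], of "\<Sum>k. norm (c k) * \<rho>^k"]
    unfolding tail_def by simp
  have truncated: "(\<Sum>k<n. (norm (e k))^2 * \<rho>^(2*k))
      \<le> (\<Sum>k<n. (norm (d k))^2 * \<rho>^(2*k)) + (2 * \<eta> n * K + (\<eta> n)^2)" if "n > 0" for n
  proof (rule partial_norm_sq_le_of_circle_bound[OF that])
    show "0 \<le> \<rho>" using \<rho> by simp
  next
    fix w :: complex assume w: "norm w = \<rho>"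
    have "norm (\<Sum>k<n. d k * w ^ k) \<le> (\<Sum>k<n. norm (d k) * \<rho>^k)"
      using norm_sum[of "\<lambda>k. d k * w ^ k" "{..<n}"] by (simp add: norm_mult norm_power w)
    also have "\<dots> \<le> K"
      unfolding K_def by (rule sum_le_suminf[OF sd]) (use \<rho> in auto)
    finally have "norm (\<Sum>k<n. d k * w ^ k) \<le> K" .
    moreover have "norm ((\<Sum>k. c k * w^k) - (\<Sum>k<n. c k * w^k)) \<le> tail c n"
      if "summable (\<lambda>k. norm (c k) * \<rho>^k)" for c
      unfolding tail_def by (rule norm_powser_tail_le[OF that]) (use w in simp)
    ultimately show "(norm (\<Sum>k<n. e k * w ^ k))^2
        \<le> (norm (\<Sum>k<n. d k * w ^ k))^2 + (2 * \<eta> n * K + (\<eta> n)^2)"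
      unfolding \<eta>_def using norm_sq_le_of_perturbation[OF le[OF w]] se sd by blast
  qed
  have "\<eta> \<longlonglongrightarrow> 0"
    using tendsto_add[OF tail_lim[OF se] tail_lim[OF sd]] unfolding \<eta>_def by simp
  then have "(\<lambda>n. (\<Sum>k<n. (norm (d k))^2 * \<rho>^(2*k)) + (2 * \<eta> n * K + (\<eta> n)^2))
      \<longlonglongrightarrow> (\<Sum>k. (norm (d k))^2 * \<rho>^(2*k)) + (2 * 0 * K + 0^2)"
    using \<rho> sd by (intro tendsto_intros summable_LIMSEQ summable_norm_sq_powser) auto
  moreover have "(\<lambda>n. \<Sum>k<n. (norm (e k))^2 * \<rho>^(2*k)) \<longlonglongrightarrow> (\<Sum>k. (norm (e k))^2 * \<rho>^(2*k))"
    using \<rho> se by (intro summable_LIMSEQ summable_norm_sq_powser) auto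
  ultimately show ?thesis
    using truncated by (intro LIMSEQ_le) (auto intro: exI[of _ 1])
qed

section \<open>Power series bounded by one on the disc\<close>

lemma summable_norm_powser_inside:
  fixes b :: "nat \<Rightarrow> 'a::{real_normed_div_algebra,banach}"
  assumes sb: "\<And>w. norm w < 1 \<Longrightarrow> summable (\<lambda>k. b k * w^k)" and \<rho>: "0 \<le> \<rho>" "\<rho> < 1"
  shows "summable (\<lambda>k. norm (b k) * \<rho>^k)"
proof -
  define r where "r = (1 + \<rho>) / 2"
  have r: "\<rho> < r" "r < 1" using \<rho> unfolding r_def by auto
  have "summable (\<lambda>k. b k * of_real r ^ k)" using r \<rho> by (intro sb) simp
  then have "summable (\<lambda>k. norm (b k * of_real \<rho> ^ k))" by (rule powser_insidea) (use r \<rho> in simp)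
  then show ?thesis using \<rho> by (simp add: norm_mult norm_power)
qed

lemma powser_holomorphic_on_ball:
  fixes b :: "nat \<Rightarrow> complex"
  assumes "\<And>w. norm w < 1 \<Longrightarrow> summable (\<lambda>k. b k * w^k)"
  shows "(\<lambda>w. \<Sum>k. b k * w^k) holomorphic_on ball 0 1"
proof -
  have "1 \<le> conv_radius b" by (rule conv_radius_geI_ex') (use assms in auto)
  then have "ereal (norm w) < conv_radius b" if "norm w < 1" for w :: complex
    using that by (meson ereal_less(3) order.strict_trans2)
  then show ?thesis
    unfolding holomorphic_on_open[OF open_ball]
    using has_field_derivative_powser by fastforce
qed

context
  fixes b :: "nat \<Rightarrow> complex"
  assumes summable_b: "\<And>w. norm w < 1 \<Longrightarrow> summable (\<lambda>k. b k * w^k)"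
    and bounded_b: "\<And>w. norm w < 1 \<Longrightarrow> norm (\<Sum>k. b k * w^k) \<le> 1"
begin

lemma norm_coeff_zero_le_one: "norm (b 0) \<le> 1"
  using bounded_b[of 0] by (simp add: powser_zero)

lemma bounded_powser_norm_sq_le:
  assumes \<rho>: "0 < \<rho>" "\<rho> < 1"
  shows "(\<Sum>k. (norm (b k))^2 * \<rho>^(2*k)) \<le> 1"
proof -
  define d :: "nat \<Rightarrow> complex" where "d k = (if k = 0 then 1 else 0)" for k
  have "(\<Sum>k. (norm (b k))^2 * \<rho>^(2*k)) \<le> (\<Sum>k. (norm (d k))^2 * \<rho>^(2*k))"
  proof (rule powser_circle_norm_sq_le)
    show "summable (\<lambda>k. norm (b k) * \<rho>^k)"
      using \<rho> by (intro summable_norm_powser_inside summable_b) auto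
    show "summable (\<lambda>k. norm (d k) * \<rho>^k)"
      by (rule summable_comparison_test'[OF summable_single[of 0 "\<lambda>_. 1::real"]]) (simp add: d_def)
    show "norm (\<Sum>k. b k * w^k) \<le> norm (\<Sum>k. d k * w^k)" if "norm w = \<rho>" for w
    proof -
      have "(\<lambda>k. d k * w^k) = (\<lambda>k. if k = 0 then 1 else 0)" by (auto simp: d_def)
      then have "(\<lambda>k. d k * w^k) sums 1" using sums_single[of 0 "\<lambda>_. 1::complex"] by simp
      then have "(\<Sum>k. d k * w^k) = 1" by (rule sums_unique[symmetric])
      then show ?thesis using bounded_b[of w] that \<rho> by simp
    qed
  qed (use \<rho> in auto)
  also have "(\<Sum>k. (norm (d k))^2 * \<rho>^(2*k)) = 1"
  proof -
    have "(\<lambda>k. (norm (d k))^2 * \<rho>^(2*k)) = (\<lambda>k. if k = 0 then 1 else 0)" by (auto simp: d_def)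
    then show ?thesis using sums_single[of 0 "\<lambda>_. 1::real"] by (simp add: sums_iff)
  qed
  finally show ?thesis .
qed

lemma bounded_powser_Schwarz_Pick:
  assumes b0: "norm (b 0) < 1" and w: "norm w < 1"
  shows "norm ((\<Sum>k. b k * w^k) - b 0) \<le> norm w * norm (1 - cnj (b 0) * (\<Sum>k. b k * w^k))"
proof -
  define h where "h w = (\<Sum>k. b k * w^k)" for w
  have den: "1 - cnj (b 0) * h w \<noteq> 0" if "norm w < 1" for w
  proof -
    have "norm (cnj (b 0) * h w) \<le> norm (b 0) * 1"
      using bounded_b[OF that] unfolding h_def by (simp add: norm_mult mult_left_le)
    then show ?thesis using b0 by auto
  qed
  define \<psi> where "\<psi> w = (h w - b 0) / (1 - cnj (b 0) * h w)" for w
  have "\<psi> holomorphic_on ball 0 1"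
    unfolding \<psi>_def using powser_holomorphic_on_ball[OF summable_b] den unfolding h_def
    by (intro holomorphic_intros) auto
  moreover have "\<psi> 0 = 0" unfolding \<psi>_def h_def by (simp add: powser_zero)
  moreover have "norm (\<psi> w) \<le> 1" if "norm w < 1" for w
    using norm_diff_le_norm_one_minus_cnj_mult[of "b 0" "h w"] bounded_b[OF that] b0 den[OF that]
    unfolding \<psi>_def h_def by (simp add: norm_divide divide_le_eq_1)
  ultimately have "norm (\<psi> w) \<le> norm w" using Schwarz_Lemma_le w by blast
  then show ?thesis
    using den[OF w] unfolding \<psi>_def h_def by (simp add: norm_divide divide_le_eq)
qed

(* Parseval's inequality comparing h - b 0 with \<rho> (1 - cnj (b 0) h) on the circle |w| = \<rho>,
   where the Schwarz--Pick estimate holds; d are the coefficients of the latter. *)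
lemma bounded_powser_Schwarz_norm_sq_le:
  assumes b0: "norm (b 0) < 1" and \<rho>: "0 < \<rho>" "\<rho> < 1"
  defines "e \<equiv> \<lambda>k. if k = 0 then 0 else b k"
  shows "(\<Sum>k. (norm (e k))^2 * \<rho>^(2*k))
         \<le> \<rho>^2 * ((1 - (norm (b 0))^2)^2 + (norm (b 0))^2 * (\<Sum>k. (norm (e k))^2 * \<rho>^(2*k)))"
proof -
  define h where "h w = (\<Sum>k. b k * w^k)" for w
  define A where "A = norm (b 0)"
  have A: "0 \<le> A" "A < 1" using b0 unfolding A_def by auto
  have schwarz: "norm (h w - b 0) \<le> \<rho> * norm (1 - cnj (b 0) * h w)" if "norm w = \<rho>" for w
    using bounded_powser_Schwarz_Pick[OF b0, of w] that \<rho> unfolding h_def by simp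
  have esum: "(\<lambda>k. e k * w^k) sums (h w - b 0)" if "norm w < 1" for w
  proof -
    have "(\<lambda>k. b k * w^k - (if k = 0 then b k * w^k else 0)) sums (h w - b 0 * w^0)"
      unfolding h_def by (intro sums_diff summable_sums summable_b that sums_single)
    moreover have "(\<lambda>k. b k * w^k - (if k = 0 then b k * w^k else 0)) = (\<lambda>k. e k * w^k)"
      unfolding e_def by auto
    ultimately show ?thesis by simp
  qed
  define d where "d k = of_real \<rho> * ((if k = 0 then of_real (1 - A^2) else 0) - cnj (b 0) * e k)" for k
  have dsum: "(\<lambda>k. d k * w^k) sums (of_real \<rho> * (1 - cnj (b 0) * h w))" if "norm w < 1" for w
  proof -
    have terms: "(\<lambda>k. d k * w^k)
        = (\<lambda>k. of_real \<rho> * ((if k = 0 then of_real (1 - A^2) * w^k else 0) - cnj (b 0) * (e k * w^k)))"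
      by (auto simp: d_def e_def algebra_simps)
    have "cnj (b 0) * b 0 = of_real (A^2)"
      unfolding A_def complex_norm_square by (simp add: mult.commute)
    then have sum: "of_real (1 - A^2) * w^0 - cnj (b 0) * (h w - b 0) = 1 - cnj (b 0) * h w"
      by (simp add: algebra_simps)
    have "(\<lambda>k. of_real \<rho> * ((if k = 0 then of_real (1 - A^2) * w^k else 0) - cnj (b 0) * (e k * w^k)))
        sums (of_real \<rho> * (of_real (1 - A^2) * w^0 - cnj (b 0) * (h w - b 0)))"
      by (intro sums_mult sums_diff sums_single esum that)
    then show ?thesis unfolding terms[symmetric] sum .
  qed
  have norm_d: "norm (d k) = (if k = 0 then \<rho> * (1 - A^2) else \<rho> * A * norm (e k))" for k
  proof (cases "k = 0")
    case True
    then have "d k = of_real (\<rho> * (1 - A^2))" by (simp add: d_def e_def)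
    then have "norm (d k) = \<bar>\<rho> * (1 - A^2)\<bar>" by (simp only: norm_of_real)
    moreover have "0 \<le> \<rho> * (1 - A^2)" using \<rho> A by (simp add: power_le_one)
    ultimately show ?thesis using True by simp
  next
    case False
    then show ?thesis using \<rho> by (simp add: d_def norm_mult A_def)
  qed
  have se: "summable (\<lambda>k. norm (e k) * \<rho>^k)"
    by (rule summable_comparison_test'[OF summable_norm_powser_inside[OF summable_b, of \<rho>]])
      (use \<rho> in \<open>auto simp: e_def\<close>)
  have "(\<Sum>k. (norm (e k))^2 * \<rho>^(2*k)) \<le> (\<Sum>k. (norm (d k))^2 * \<rho>^(2*k))"
  proof (rule powser_circle_norm_sq_le[OF \<rho>(1) se])
    show "summable (\<lambda>k. norm (d k) * \<rho>^k)"
      unfolding norm_d using se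
      by (intro summable_comparison_test'[OF summable_add[OF summable_single[of 0 "\<lambda>_. \<rho> * (1 - A^2)"]
            summable_mult[OF se, of "\<rho> * A"]]]) (use \<rho> A in \<open>auto simp: mult_ac\<close>)
    show "norm (\<Sum>k. e k * w^k) \<le> norm (\<Sum>k. d k * w^k)" if "norm w = \<rho>" for w
      using schwarz[OF that] esum dsum that \<rho> by (simp add: sums_iff norm_mult)
  qed
  also have "\<dots> = \<rho>^2 * ((1 - A^2)^2 + A^2 * (\<Sum>k. (norm (e k))^2 * \<rho>^(2*k)))"
  proof -
    have "(\<lambda>k. (norm (d k))^2 * \<rho>^(2*k))
        = (\<lambda>k. (if k = 0 then \<rho>^2 * (1 - A^2)^2 else 0) + \<rho>^2 * A^2 * ((norm (e k))^2 * \<rho>^(2*k)))"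
      by (auto simp: norm_d e_def power_mult_distrib)
    moreover have "(\<lambda>k. (if k = 0 then \<rho>^2 * (1 - A^2)^2 else 0) + \<rho>^2 * A^2 * ((norm (e k))^2 * \<rho>^(2*k)))
        sums (\<rho>^2 * (1 - A^2)^2 + \<rho>^2 * A^2 * (\<Sum>k. (norm (e k))^2 * \<rho>^(2*k)))"
      using \<rho> se by (intro sums_add sums_mult summable_sums summable_norm_sq_powser sums_single) auto
    ultimately show ?thesis by (simp add: sums_iff algebra_simps)
  qed
  finally show ?thesis unfolding A_def .
qed

end

section \<open>Real-variable estimates\<close>

(* The relation gives 8 (1 - X\<^sup>2) = (3 - Y)\<^sup>2, so with t = 1 - A X the claim reduces to
   2 (t - (3 - Y) / 4)\<^sup>2 \<ge> 0. Equality at t = (3 - Y) / 4 is what determines the extremal \<alpha>. *)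
lemma bohr_relation_bound:
  fixes A X R Y :: real
  assumes A: "0 \<le> A" "A \<le> 1" and X: "0 < X" "X < 1" and "0 < R" "X = R * Y"
    and rel: "- 6 * Y + Y^2 + 8 * X^2 + 1 = 0"
  shows "R * (A + X * (1 - A^2) / (1 - A * X)) \<le> 1"
proof -
  define t where "t = 1 - A * X"
  have "A * X \<le> 1 * X" using A X by (intro mult_right_mono) auto
  then have t0: "t > 0" unfolding t_def using X by linarith
  have "1 - X^2 = (3 - Y)^2 / 8" using rel by (simp add: power2_eq_square algebra_simps)
  then have "2 * t^2 - (3 - Y) * t + (1 - X^2) = 2 * (t - (3 - Y) / 4)^2"
    by (simp add: power2_eq_square field_simps)
  then have quadratic: "0 \<le> 2 * t^2 - (3 - Y) * t + (1 - X^2)" by simp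
  have "X * (R * (A * t + X * (1 - A^2))) = R * (3 * t - 2 * t^2 - (1 - X^2))"
    unfolding t_def by (simp add: power2_eq_square algebra_simps)
  also have "\<dots> \<le> R * (Y * t)"
    using quadratic \<open>0 < R\<close> by (intro mult_left_mono) (auto simp: algebra_simps)
  also have "\<dots> = X * t" using \<open>X = R * Y\<close> by simp
  finally have "R * (A * t + X * (1 - A^2)) \<le> t" using X by (simp add: mult_le_cancel_left)
  then show ?thesis using t0 unfolding t_def[symmetric] by (simp add: field_simps)
qed

lemma add_mult_sqrt_ratio_le:
  fixes A X :: real
  assumes A: "0 \<le> A" "A \<le> X" and X: "X^2 \<le> 1/2"
  shows "A + X * sqrt (1 - A^2) / sqrt (1 - X^2) \<le> 2 * X"
proof -
  define s c where "s = sqrt (1 - A^2)" and "c = sqrt (1 - X^2)"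
  have A2: "A^2 \<le> X^2" using A by (simp add: power_mono)
  have s2: "s^2 = 1 - A^2" unfolding s_def by (rule real_sqrt_pow2) (use A2 X in linarith)
  have c2: "c^2 = 1 - X^2" unfolding c_def by (rule real_sqrt_pow2) (use X in linarith)
  have "0 \<le> s" unfolding s_def by (rule real_sqrt_ge_zero) (use A2 X in linarith)
  have "0 < c" unfolding c_def using X by simp
  have "X^2 \<le> c^2" using c2 X by linarith
  then have "X \<le> c" by (rule power2_le_imp_le) (use \<open>0 < c\<close> in simp)
  have "c^2 \<le> s^2" using s2 c2 A2 by linarith
  then have "c \<le> s" by (rule power2_le_imp_le) (use \<open>0 \<le> s\<close> in simp)
  have "(s - c) * (s + c) = (X - A) * (X + A)"
    using s2 c2 by (simp add: power2_eq_square algebra_simps)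
  then have "X * (s - c) * (s + c) = (X * (X + A)) * (X - A)"
    by (metis mult.assoc mult.commute)
  also have "\<dots> \<le> (c * (s + c)) * (X - A)"
    using \<open>X \<le> c\<close> \<open>c \<le> s\<close> A \<open>0 < c\<close> by (intro mult_right_mono mult_mono) auto
  also have "\<dots> = c * (X - A) * (s + c)" by (simp add: algebra_simps)
  finally have "X * (s - c) \<le> c * (X - A)"
    using \<open>0 \<le> s\<close> \<open>0 < c\<close> by (simp add: mult_le_cancel_right)
  then have "A * c + X * s \<le> 2 * X * c" by (simp add: algebra_simps)
  then show ?thesis using \<open>0 < c\<close> unfolding s_def[symmetric] c_def[symmetric] by (simp add: field_simps)
qed

lemma suminf_mult_le_weighted_squares:
  fixes U W :: "nat \<Rightarrow> real"
  assumes sU: "summable (\<lambda>k. (U k)^2)" and sW: "summable (\<lambda>k. (W k)^2)" and l: "0 < l"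
  shows "summable (\<lambda>k. U k * W k)"
    and "(\<Sum>k. U k * W k) \<le> l/2 * (\<Sum>k. (U k)^2) + 1/(2*l) * (\<Sum>k. (W k)^2)"
proof -
  have amgm: "u * w \<le> l/2 * u^2 + 1/(2*l) * w^2" for u w :: real
  proof -
    have "0 \<le> (l * u - w)^2" by simp
    then have "2 * l * (u * w) \<le> 2 * l * (l/2 * u^2 + 1/(2*l) * w^2)"
      using l by (simp add: power2_eq_square algebra_simps)
    then show ?thesis using l by (simp add: mult_le_cancel_left)
  qed
  have sR: "summable (\<lambda>k. l/2 * (U k)^2 + 1/(2*l) * (W k)^2)"
    by (intro summable_add summable_mult sU sW)
  show sUW: "summable (\<lambda>k. U k * W k)"
    by (rule summable_comparison_test'[OF sR]) (use amgm[of "\<bar>U _\<bar>" "\<bar>W _\<bar>"] in \<open>simp add: abs_mult\<close>)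
  have "(\<Sum>k. U k * W k) \<le> (\<Sum>k. l/2 * (U k)^2 + 1/(2*l) * (W k)^2)"
    by (rule suminf_le[OF amgm sUW sR])
  also have "\<dots> = (\<Sum>k. l/2 * (U k)^2) + (\<Sum>k. 1/(2*l) * (W k)^2)"
    by (intro suminf_add[symmetric] summable_mult sU sW)
  also have "\<dots> = l/2 * (\<Sum>k. (U k)^2) + 1/(2*l) * (\<Sum>k. (W k)^2)"
    using sU sW by (simp only: suminf_mult)
  finally show "(\<Sum>k. U k * W k) \<le> l/2 * (\<Sum>k. (U k)^2) + 1/(2*l) * (\<Sum>k. (W k)^2)" .
qed

lemma sums_geometric_tail:
  fixes q :: "'a::real_normed_field"
  assumes "norm q < 1"
  shows "(\<lambda>k. if k = 0 then 0 else q^k) sums (q / (1 - q))"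
proof -
  have "(\<lambda>k. q^k - (if k = 0 then q^k else 0)) sums (1 / (1 - q) - q^0)"
    by (intro sums_diff geometric_sums assms sums_single)
  moreover have "1 - q \<noteq> 0" using assms by auto
  then have "1 / (1 - q) - q^0 = q / (1 - q)" by (simp add: field_simps)
  ultimately show ?thesis by (simp add: if_distrib cong: if_cong)
qed

lemma summable_le_of_radial_bound:
  fixes c :: "nat \<Rightarrow> real"
  assumes c: "\<And>k. 0 \<le> c k"
    and sc: "\<And>s. 0 < s \<Longrightarrow> s < 1 \<Longrightarrow> summable (\<lambda>k. c k * s^k)"
    and bound: "\<And>s. 0 < s \<Longrightarrow> s < 1 \<Longrightarrow> (\<Sum>k. c k * s^k) \<le> B"
  shows "summable c" and "suminf c \<le> B"
proof -
  have partial: "(\<Sum>k<n. c k) \<le> B" for n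
  proof -
    have "((\<lambda>s. \<Sum>k<n. c k * s^k) \<longlongrightarrow> (\<Sum>k<n. c k * 1^k)) (at_left 1)"
      by (intro tendsto_intros)
    moreover have "eventually (\<lambda>s. (\<Sum>k<n. c k * s^k) \<le> B) (at_left (1::real))"
    proof -
      have "eventually (\<lambda>s. s \<in> {0<..<1}) (at_left (1::real))"
        by (rule eventually_at_left_real) simp
      then show ?thesis
      proof (rule eventually_mono)
        fix s :: real assume "s \<in> {0<..<1}"
        then have "(\<Sum>k<n. c k * s^k) \<le> (\<Sum>k. c k * s^k)"
          using c by (intro sum_le_suminf sc) auto
        also have "\<dots> \<le> B" using bound \<open>s \<in> {0<..<1}\<close> by simp
        finally show "(\<Sum>k<n. c k * s^k) \<le> B" .
      qed
    qed
    ultimately show ?thesis by (simp add: tendsto_upperbound)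
  qed
  show "summable c" by (rule summableI_nonneg_bounded[OF c partial])
  show "suminf c \<le> B" by (rule suminf_le_const[OF \<open>summable c\<close> partial])
qed

(* Cauchy--Schwarz for the products (\<beta> k \<sigma>^k) (X / \<sigma>)^k in weighted AM-GM form;
   \<sigma>\<^sup>2 = X / A is the optimal radius. *)
lemma coeff_sum_le_of_Schwarz_bound:
  fixes \<beta> :: "nat \<Rightarrow> real" and A X :: real
  assumes \<beta>0: "\<beta> 0 = 0"
    and sT: "\<And>\<rho>. 0 < \<rho> \<Longrightarrow> \<rho> < 1 \<Longrightarrow> summable (\<lambda>k. (\<beta> k)^2 * \<rho>^(2*k))"
    and sch: "\<And>\<rho>. 0 < \<rho> \<Longrightarrow> \<rho> < 1 \<Longrightarrow>
               (\<Sum>k. (\<beta> k)^2 * \<rho>^(2*k)) \<le> \<rho>^2 * ((1 - A^2)^2 + A^2 * (\<Sum>k. (\<beta> k)^2 * \<rho>^(2*k)))"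
    and X: "0 < X" "X < A" "A < 1"
  shows "(\<Sum>k. \<beta> k * X^k) \<le> X * (1 - A^2) / (1 - A * X)"
proof -
  define \<sigma> where "\<sigma> = sqrt (X / A)"
  define T where "T = (\<Sum>k. (\<beta> k)^2 * \<sigma>^(2*k))"
  define B where "B = X * (1 - A^2) / (1 - A * X)"
  define V where "V = A * X / (1 - A * X)"
  define U0 where "U0 = (X / A) * (1 - A^2)^2 / (1 - A * X)"
  have A0: "0 < A" using X by simp
  have \<sigma>2: "\<sigma>^2 = X / A" unfolding \<sigma>_def using X A0 by simp
  have \<sigma>: "0 < \<sigma>" "\<sigma> < 1" unfolding \<sigma>_def using X A0 by auto
  have AX: "A * X < 1" using X mult_strict_mono[of A 1 X 1] by simp
  have "0 < 1 - A^2" using X A0 by (simp add: power_less_one_iff)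
  then have U0: "0 < U0" and B: "0 < B" unfolding U0_def B_def using X A0 AX by simp_all
  have "T \<le> \<sigma>^2 * ((1 - A^2)^2 + A^2 * T)" using sch[OF \<sigma>] unfolding T_def .
  then have "T * (1 - A^2 * \<sigma>^2) \<le> \<sigma>^2 * (1 - A^2)^2" by (simp add: algebra_simps)
  then have "T * (1 - A * X) \<le> (X / A) * (1 - A^2)^2"
    unfolding \<sigma>2 using A0 by (simp add: power2_eq_square)
  then have TU0: "T \<le> U0" unfolding U0_def by (subst pos_le_divide_eq) (use AX in auto)
  define U where "U k = \<beta> k * \<sigma>^k" for k
  define W where "W k = (if k = 0 then 0 else (X / \<sigma>)^k)" for k
  have UW: "\<beta> k * X^k = U k * W k" for k
    using \<beta>0 \<sigma> unfolding U_def W_def by (simp add: power_divide)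
  have U2: "(\<lambda>k. (U k)^2) = (\<lambda>k. (\<beta> k)^2 * \<sigma>^(2*k))"
    unfolding U_def by (simp add: power_mult_distrib power_mult[symmetric] mult.commute)
  have "(X / \<sigma>)^2 = A * X" unfolding power_divide \<sigma>2 using A0 X by (simp add: field_simps power2_eq_square)
  then have "((X / \<sigma>)^k)^2 = (A * X)^k" for k by (metis power_mult mult.commute)
  then have "(\<lambda>k. (W k)^2) = (\<lambda>k. if k = 0 then 0 else (A * X)^k)"
    unfolding W_def by auto
  then have W2: "(\<lambda>k. (W k)^2) sums V"
    unfolding V_def using sums_geometric_tail[of "A * X"] AX A0 X by simp
  define l where "l = B / U0"
  have l: "0 < l" unfolding l_def using B U0 by simp
  have "(\<Sum>k. \<beta> k * X^k) = (\<Sum>k. U k * W k)" by (simp only: UW)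
  also have "\<dots> \<le> l/2 * T + 1/(2*l) * V"
    using suminf_mult_le_weighted_squares(2)[OF _ sums_summable[OF W2] l, of U] sT[OF \<sigma>] W2
    unfolding U2 T_def by (simp add: sums_iff)
  also have "\<dots> \<le> l/2 * U0 + 1/(2*l) * V" using TU0 l by simp
  also have "\<dots> = B"
  proof -
    define D where "D = 1 - A * X"
    have "D \<noteq> 0" using AX unfolding D_def by simp
    have "V * U0 = (A * X / D) * ((X / A) * (1 - A^2)^2 / D)" unfolding V_def U0_def D_def ..
    also have "\<dots> = (X * (1 - A^2) / D)^2" using A0 \<open>D \<noteq> 0\<close> by (simp add: field_simps power2_eq_square)
    finally have VU0: "V * U0 = B^2" unfolding B_def D_def .
    have "l/2 * U0 + 1/(2*l) * V = B/2 + V * U0 / (2 * B)"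
      unfolding l_def using U0 B by (simp add: field_simps)
    also have "\<dots> = B" unfolding VU0 using B by (simp add: power2_eq_square)
    finally show ?thesis .
  qed
  finally show ?thesis unfolding B_def .
qed

lemma coeff_sum_le_of_square_sum_bound:
  fixes \<beta> :: "nat \<Rightarrow> real" and A X :: real
  assumes \<beta>0: "\<beta> 0 = 0" and s\<beta>: "summable (\<lambda>k. (\<beta> k)^2)" and \<beta>: "(\<Sum>k. (\<beta> k)^2) \<le> 1 - A^2"
    and A: "0 \<le> A" "A \<le> X" and X: "0 < X" "X < 1"
  shows "(\<Sum>k. \<beta> k * X^k) \<le> X * sqrt (1 - A^2) / sqrt (1 - X^2)"
proof -
  define s c where "s = sqrt (1 - A^2)" and "c = sqrt (1 - X^2)"
  define W where "W k = (if k = 0 then 0 else X^k)" for k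
  have "X^2 < 1" using X by (simp add: power_less_one_iff)
  moreover have "A^2 \<le> X^2" using A by (simp add: power_mono)
  ultimately have s: "0 < s" "s^2 = 1 - A^2" and c: "0 < c" "c^2 = 1 - X^2"
    unfolding s_def c_def by auto
  have "(X^k)^2 = (X^2)^k" for k by (metis power_mult mult.commute)
  then have "(\<lambda>k. (W k)^2) = (\<lambda>k. if k = 0 then 0 else (X^2)^k)"
    unfolding W_def by auto
  then have W2: "(\<lambda>k. (W k)^2) sums (X^2 / (1 - X^2))"
    using sums_geometric_tail[of "X^2"] \<open>X^2 < 1\<close> by simp
  define l where "l = X / (s * c)"
  have l: "0 < l" unfolding l_def using X(1) s c by simp
  have XW: "\<beta> k * X^k = \<beta> k * W k" for k using \<beta>0 by (simp add: W_def)
  have "(\<Sum>k. \<beta> k * X^k) = (\<Sum>k. \<beta> k * W k)" by (simp only: XW)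
  also have "\<dots> \<le> l/2 * (\<Sum>k. (\<beta> k)^2) + 1/(2*l) * (X^2 / (1 - X^2))"
    using suminf_mult_le_weighted_squares(2)[OF s\<beta> sums_summable[OF W2] l] W2 by (simp add: sums_iff mult_ac)
  also have "\<dots> \<le> l/2 * (1 - A^2) + 1/(2*l) * (X^2 / (1 - X^2))" using \<beta> l by simp
  also have "\<dots> = X * s / c"
    unfolding l_def s(2)[symmetric] c(2)[symmetric] using s c X(1) by (simp add: field_simps power2_eq_square)
  finally show ?thesis unfolding s_def c_def .
qed

lemma bohr_inequality_real:
  fixes \<beta> :: "nat \<Rightarrow> real" and A R X Y :: real
  assumes \<beta>0: "\<beta> 0 = 0" and \<beta>_nonneg: "\<And>k. 0 \<le> \<beta> k"
    and s\<beta>: "\<And>s. 0 \<le> s \<Longrightarrow> s < 1 \<Longrightarrow> summable (\<lambda>k. \<beta> k * s^k)"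
    and A: "0 \<le> A" "A \<le> 1"
    and bessel: "\<And>\<rho>. 0 < \<rho> \<Longrightarrow> \<rho> < 1 \<Longrightarrow> A^2 + (\<Sum>k. (\<beta> k)^2 * \<rho>^(2*k)) \<le> 1"
    and schwarz: "\<And>\<rho>. A < 1 \<Longrightarrow> 0 < \<rho> \<Longrightarrow> \<rho> < 1 \<Longrightarrow>
      (\<Sum>k. (\<beta> k)^2 * \<rho>^(2*k)) \<le> \<rho>^2 * ((1 - A^2)^2 + A^2 * (\<Sum>k. (\<beta> k)^2 * \<rho>^(2*k)))"
    and R: "0 < R" and X: "0 < X" "X < 1" "X = R * Y" and Y: "Y \<le> 1"
    and rel: "- 6 * Y + Y^2 + 8 * X^2 + 1 = 0"
  shows "R * (A + (\<Sum>k. \<beta> k * X^k)) \<le> 1"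
proof -
  have s\<beta>2: "summable (\<lambda>k. (\<beta> k)^2 * \<rho>^(2*k))" if "0 \<le> \<rho>" "\<rho> < 1" for \<rho>
    using summable_norm_sq_powser[of \<rho> \<beta>] s\<beta>[OF that] that \<beta>_nonneg by simp
  have sqrt_pow: "sqrt s ^ (2*k) = s^k" if "0 \<le> s" for s and k :: nat
    using that by (simp add: power_mult)
  have radial: "summable (\<lambda>k. (\<beta> k)^2 * s^k)" "(\<Sum>k. (\<beta> k)^2 * s^k) \<le> 1 - A^2"
    if "0 < s" "s < 1" for s
    using s\<beta>2[of "sqrt s"] bessel[of "sqrt s"] that by (simp_all add: sqrt_pow)
  have "summable (\<lambda>k. (\<beta> k)^2)" and sq_sum: "(\<Sum>k. (\<beta> k)^2) \<le> 1 - A^2"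
    using summable_le_of_radial_bound[of "\<lambda>k. (\<beta> k)^2", OF _ radial] by simp_all
  have "X^2 \<le> 1/2"
  proof -
    have "0 \<le> (1 - Y) * (5 - Y)" using Y by (intro mult_nonneg_nonneg) auto
    then show ?thesis using rel by (simp add: algebra_simps power2_eq_square)
  qed
  show ?thesis
  proof (cases "A \<le> X")
    case True
    have "A + (\<Sum>k. \<beta> k * X^k) \<le> A + X * sqrt (1 - A^2) / sqrt (1 - X^2)"
      using coeff_sum_le_of_square_sum_bound[OF \<beta>0 \<open>summable _\<close> sq_sum A(1) True X(1,2)] by simp
    also have "\<dots> \<le> 2 * X" using add_mult_sqrt_ratio_le[OF A(1) True \<open>X^2 \<le> 1/2\<close>] .
    also have "\<dots> = X + X * (1 - X^2) / (1 - X * X)" \<comment> \<open>the case \<open>A = X\<close> of \<open>bohr_relation_bound\<close>\<close>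
    proof -
      have "X * X < 1" using X(1,2) mult_strict_mono[of X 1 X 1] by simp
      then show ?thesis by (simp add: power2_eq_square)
    qed
    finally have "R * (A + (\<Sum>k. \<beta> k * X^k)) \<le> R * (X + X * (1 - X^2) / (1 - X * X))"
      using R by simp
    also have "\<dots> \<le> 1" using bohr_relation_bound[OF _ _ X(1,2) R X(3) rel] X by simp
    finally show ?thesis .
  next
    case False
    have "(\<Sum>k. \<beta> k * X^k) \<le> X * (1 - A^2) / (1 - A * X)"
    proof (cases "A = 1")
      case True
      then have "(\<Sum>k. (\<beta> k)^2) = 0"
        using sq_sum suminf_nonneg[OF \<open>summable _\<close>] by simp
      then have "\<beta> k = 0" for k
        using suminf_eq_zero_iff[OF \<open>summable _\<close>] by simp
      then show ?thesis using True by simp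
    next
      case False
      then show ?thesis
        using coeff_sum_le_of_Schwarz_bound[OF \<beta>0 s\<beta>2 schwarz] A X \<open>\<not> A \<le> X\<close> by simp
    qed
    then have "R * (A + (\<Sum>k. \<beta> k * X^k)) \<le> R * (A + X * (1 - A^2) / (1 - A * X))"
      using R by simp
    also have "\<dots> \<le> 1" by (rule bohr_relation_bound[OF A X(1,2) R X(3) rel])
    finally show ?thesis .
  qed
qed

section \<open>\<open>p\<close>-symmetric functions\<close>

lemma p_symmetric_coeffs_zero:
  assumes "p_symmetric_coeffs p a" "n \<notin> range (\<lambda>k. p * k + 1)"
  shows "a n = 0"
  using assms unfolding p_symmetric_coeffs_def by auto

lemma sums_p_symmetric_iff:
  fixes F :: "nat \<Rightarrow> 'a::real_normed_vector"
  assumes "p \<ge> 1" and "\<And>n. n \<notin> range (\<lambda>k. p * k + 1) \<Longrightarrow> F n = 0"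
  shows "(\<lambda>k. F (p * k + 1)) sums s \<longleftrightarrow> F sums s"
proof (rule sums_mono_reindex)
  show "strict_mono (\<lambda>k. p * k + 1)" using assms(1) by (intro strict_monoI) simp
qed (use assms(2) in auto)

lemma majorant_summable:
  fixes a :: "nat \<Rightarrow> complex"
  assumes "\<forall>z\<in>ball 0 1. (\<lambda>n. a n * z ^ n) sums f z" "0 \<le> r" "r < 1"
  shows "summable (\<lambda>n. norm (a n) * r^n)"
  by (rule summable_norm_powser_inside) (use assms in \<open>auto intro: sums_summable\<close>)

lemma majorant_mono:
  assumes "summable (\<lambda>n. norm (a n) * R^n)" "0 \<le> r" "r \<le> R"
  shows "majorant a r \<le> majorant a R"
proof -
  have le: "norm (a n) * r^n \<le> norm (a n) * R^n" for n
    using assms by (intro mult_left_mono power_mono) auto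
  have "summable (\<lambda>n. norm (a n) * r^n)"
    by (rule summable_comparison_test'[OF assms(1)]) (use le assms(2) in auto)
  then show ?thesis unfolding majorant_def by (rule suminf_le[OF le _ assms(1)])
qed

lemma majorant_p_symmetric:
  assumes p: "p \<ge> 1" and sym: "p_symmetric_coeffs p a"
    and sa: "summable (\<lambda>n. norm (a n) * r^n)" and r: "0 < r"
  shows "(\<lambda>k. norm (a (p * k + 1)) * (r^p)^k) sums (majorant a r / r)"
proof -
  have "(\<lambda>n. norm (a n) * r^n) sums majorant a r"
    unfolding majorant_def using sa by (rule summable_sums)
  then have "(\<lambda>k. norm (a (p * k + 1)) * r^(p * k + 1)) sums majorant a r"
    by (subst sums_p_symmetric_iff[OF p]) (use p_symmetric_coeffs_zero[OF sym] in auto)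
  then have "(\<lambda>k. norm (a (p * k + 1)) * r^(p * k + 1) / r) sums (majorant a r / r)"
    by (rule sums_divide)
  moreover have "(\<lambda>k. norm (a (p * k + 1)) * r^(p * k + 1) / r) = (\<lambda>k. norm (a (p * k + 1)) * (r^p)^k)"
    using r by (simp add: power_add power_mult)
  ultimately show ?thesis by simp
qed

lemma complex_root_in_ball:
  fixes w :: complex
  assumes "p \<ge> 1" "norm w < 1" "w \<noteq> 0"
  obtains z where "z ^ p = w" "z \<noteq> 0" "norm z < 1"
proof
  define z where "z = exp (Ln w / of_nat p)"
  have "z ^ p = exp (of_nat p * (Ln w / of_nat p))"
    unfolding z_def by (rule exp_of_nat_mult[symmetric])
  also have "\<dots> = w" using assms by simp
  finally show "z ^ p = w" .
  then have "norm z ^ p < 1" using assms by (simp add: norm_power[symmetric])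
  then show "norm z < 1" using assms by (simp add: power_less_one_iff)
  show "z \<noteq> 0" unfolding z_def by simp
qed

lemma p_symmetric_factor_sums:
  assumes p: "p \<ge> 1" and sm: "\<forall>z\<in>ball 0 1. (\<lambda>n. a n * z ^ n) sums f z"
    and sym: "p_symmetric_coeffs p a" and z: "norm z < 1" "z \<noteq> 0"
  shows "(\<lambda>k. a (p * k + 1) * (z^p)^k) sums (f z / z)"
proof -
  have "(\<lambda>n. a n * z ^ n) sums f z" using sm z by simp
  then have "(\<lambda>k. a (p * k + 1) * z ^ (p * k + 1)) sums f z"
    by (subst sums_p_symmetric_iff[OF p]) (use p_symmetric_coeffs_zero[OF sym] in auto)
  then have "(\<lambda>k. a (p * k + 1) * z ^ (p * k + 1) / z) sums (f z / z)" by (rule sums_divide)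
  moreover have "(\<lambda>k. a (p * k + 1) * z ^ (p * k + 1) / z) = (\<lambda>k. a (p * k + 1) * (z^p)^k)"
    using z by (simp add: power_add power_mult)
  ultimately show ?thesis by simp
qed

(* f z = z h (z^p), and f 0 = 0 gives |f z| \<le> |z| by Schwarz, so |h| \<le> 1 away from 0,
   and at 0 by continuity. *)
lemma p_symmetric_factor_bounded:
  assumes p: "p \<ge> 1" and holf: "f holomorphic_on ball 0 1"
    and sm: "\<forall>z\<in>ball 0 1. (\<lambda>n. a n * z ^ n) sums f z"
    and sym: "p_symmetric_coeffs p a" and bd: "\<forall>z\<in>ball 0 1. norm (f z) \<le> 1"
  shows "\<And>w. norm w < 1 \<Longrightarrow> summable (\<lambda>k. a (p * k + 1) * w^k)"
    and "\<And>w. norm w < 1 \<Longrightarrow> norm (\<Sum>k. a (p * k + 1) * w^k) \<le> 1"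
proof -
  define h where "h w = (\<Sum>k. a (p * k + 1) * w^k)" for w
  have "(\<lambda>n. a n * 0 ^ n) sums f 0" using sm by (metis centre_in_ball zero_less_one)
  then have "a 0 = f 0" by (rule sums_unique2[OF powser_sums_zero])
  moreover have "a 0 = 0" using p_symmetric_coeffs_zero[OF sym, of 0] by auto
  ultimately have "f 0 = 0" by simp
  have schwarz: "norm (f z) \<le> norm z" if "norm z < 1" for z
    by (rule Schwarz_Lemma_le[OF holf \<open>f 0 = 0\<close> _ that]) (use bd in simp)
  have factor: "summable (\<lambda>k. a (p * k + 1) * w^k) \<and> norm (h w) \<le> 1"
    if w: "norm w < 1" "w \<noteq> 0" for w
  proof -
    obtain z where z: "z ^ p = w" "z \<noteq> 0" "norm z < 1" using complex_root_in_ball[OF p w] .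
    have "(\<lambda>k. a (p * k + 1) * w^k) sums (f z / z)"
      using p_symmetric_factor_sums[OF p sm sym z(3,2)] z(1) by simp
    moreover have "norm (f z / z) \<le> 1"
      using schwarz[OF z(3)] z(2) by (simp add: norm_divide divide_le_eq_1)
    ultimately show ?thesis unfolding h_def by (simp add: sums_iff)
  qed
  show summable_factor: "summable (\<lambda>k. a (p * k + 1) * w^k)" if "norm w < 1" for w
  proof (cases "w = 0")
    case True
    then show ?thesis by simp
  qed (use factor that in blast)
  show "norm (h w) \<le> 1" if "norm w < 1" for w
  proof (cases "w = 0")
    case True
    have "continuous_on (ball 0 1) h"
      unfolding h_def by (intro holomorphic_on_imp_continuous_on powser_holomorphic_on_ball summable_factor)
    then have "isCont h 0" by (simp add: continuous_on_eq_continuous_at)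
    then have "((\<lambda>w. norm (h w)) \<longlongrightarrow> norm (h 0)) (at 0)"
      by (intro tendsto_norm) (simp add: isCont_def)
    moreover have "eventually (\<lambda>w. norm (h w) \<le> 1) (at (0::complex))"
      unfolding eventually_at by (intro exI[of _ 1]) (auto simp: dist_norm factor)
    ultimately show ?thesis using True by (simp add: tendsto_upperbound)
  qed (use factor that in blast)
qed

section \<open>The radius \<open>r\<^sub>p\<close>\<close>

lemma Greatest_zero_in_interval:
  fixes P :: "real \<Rightarrow> real"
  assumes cont: "continuous_on {a..b} P" and c: "a < c" "c < b" "P c = 0" and Pb: "P b \<noteq> 0"
  defines "g \<equiv> GREATEST r. a < r \<and> r < b \<and> P r = 0"
  shows "c \<le> g" "g < b" "P g = 0"
proof -
  define S where "S = {r. a < r \<and> r < b \<and> P r = 0}"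
  define s where "s = Sup S"
  have "c \<in> S" "bdd_above S" using c unfolding S_def by (auto intro: bdd_aboveI[of _ b])
  then have "c \<le> s" "s \<in> closure S" unfolding s_def by (auto intro: cSup_upper closure_contains_Sup)
  moreover have "closure S \<subseteq> {r \<in> {a..b}. P r = 0}"
    by (intro closure_minimal continuous_closed_preimage_constant cont) (auto simp: S_def)
  ultimately have "s \<le> b" "P s = 0" by auto
  then have "s \<in> S" using \<open>c \<le> s\<close> c Pb unfolding S_def by (cases "s = b") auto
  have "g = s"
    unfolding g_def S_def[symmetric]
    by (rule Greatest_equality) (use \<open>s \<in> S\<close> \<open>bdd_above S\<close> in \<open>auto intro: cSup_upper simp: s_def S_def\<close>)
  then show "c \<le> g" "g < b" "P g = 0" using \<open>c \<le> s\<close> \<open>s \<in> S\<close> unfolding S_def by auto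
qed

lemma power_eq_mult_power_pred:
  fixes r :: real
  assumes "p \<ge> 1" shows "r^p = r * r^(p - 1)"
  using assms by (metis Suc_diff_1 less_le_trans power_Suc zero_less_one)

lemma bohr_poly_eq:
  assumes "p \<ge> 1"
  shows "bohr_poly p r = - 6 * r^(p - 1) + (r^(p - 1))^2 + 8 * (r^p)^2 + 1"
  unfolding bohr_poly_def by (simp add: power_mult[symmetric] mult.commute)

lemma bohr_poly_negative_point:
  assumes p: "p \<ge> 1"
  obtains r0 where "0 < r0" "r0 < 1" "bohr_poly p r0 < 0" "\<And>r. r0 < r \<Longrightarrow> 1/3 < r^(p - 1)"
proof (cases "p = 1")
  case True
  show ?thesis by (rule that[of "1/2"]) (use True in \<open>simp_all add: bohr_poly_def power2_eq_square\<close>)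
next
  case False
  then have p2: "0 < p - 1" using p by simp
  define r0 where "r0 = root (p - 1) (1/3)"
  have r0: "0 < r0" "r0 < 1" "r0^(p - 1) = 1/3" unfolding r0_def using p2 by (auto intro: real_root_gt_zero)
  have "bohr_poly p r0 = - 6 * (1/3) + (1/3)^2 + 8 * (r0 * (1/3))^2 + 1"
    unfolding bohr_poly_eq[OF p] power_eq_mult_power_pred[OF p, of r0] r0(3) ..
  also have "\<dots> = 8/9 * (r0 * r0 - 1)" by (simp add: power2_eq_square algebra_simps)
  also have "\<dots> < 0" using mult_strict_mono[of r0 1 r0 1] r0 by simp
  finally have "bohr_poly p r0 < 0" .
  moreover have "1/3 < r^(p - 1)" if "r0 < r" for r
  proof -
    have "r0^(p - 1) < r^(p - 1)" by (rule power_strict_mono) (use that r0 p2 in auto)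
    then show ?thesis using r0(3) by simp
  qed
  ultimately show ?thesis by (rule that[OF r0(1,2)])
qed

(* The bound 1/3 < r_p^p is what places the extremal \<alpha> in (0, 1). *)
lemma bohr_radius_root:
  assumes p: "p \<ge> 1"
  shows "0 < bohr_radius p" "bohr_radius p < 1" "bohr_poly p (bohr_radius p) = 0"
    and "1/3 < bohr_radius p ^ p"
proof -
  obtain r0 where r0: "0 < r0" "r0 < 1" "bohr_poly p r0 < 0" and y3: "\<And>r. r0 < r \<Longrightarrow> 1/3 < r^(p - 1)"
    using bohr_poly_negative_point[OF p] by blast
  have cont: "continuous_on A (bohr_poly p)" for A unfolding bohr_poly_def by (intro continuous_intros)
  have P1: "bohr_poly p 1 = 4" unfolding bohr_poly_def by simp
  obtain c where c: "r0 \<le> c" "c \<le> 1" "bohr_poly p c = 0"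
    using IVT'[of "bohr_poly p" r0 0 1] r0 P1 cont by auto
  have "r0 < c" "c < 1" using c r0 P1 by (auto simp: order_le_less)
  then have g: "c \<le> bohr_radius p" "bohr_radius p < 1" "bohr_poly p (bohr_radius p) = 0"
    using Greatest_zero_in_interval[of 0 1 "bohr_poly p" c] cont c r0 P1
    unfolding bohr_radius_def by auto
  then show "0 < bohr_radius p" "bohr_radius p < 1" "bohr_poly p (bohr_radius p) = 0"
    using r0 \<open>r0 < c\<close> by auto
  define x y where "x = bohr_radius p ^ p" and "y = bohr_radius p ^ (p - 1)"
  have "1/3 < y" unfolding y_def by (rule y3) (use g(1) \<open>r0 < c\<close> in linarith)
  moreover have "y \<le> 1" unfolding y_def
    by (rule power_le_one) (use g(2) \<open>0 < bohr_radius p\<close> in auto)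
  moreover have "8 * (1 - x^2) = (3 - y)^2"
    using g(3) unfolding bohr_poly_eq[OF p] x_def[symmetric] y_def[symmetric]
    by (simp add: power2_eq_square algebra_simps)
  moreover have "(3 - y)^2 < (8/3)^2" using \<open>1/3 < y\<close> \<open>y \<le> 1\<close> by (intro power_strict_mono) auto
  ultimately have "(1/3)^2 < x^2" by (simp add: power_divide)
  then show "1/3 < bohr_radius p ^ p"
    unfolding x_def by (rule power2_less_imp_less) (use \<open>0 < bohr_radius p\<close> in simp)
qed

lemma bohr_root_relation:
  fixes r :: real
  assumes p: "p \<ge> 1" and r: "0 < r" "r < 1" "bohr_poly p r = 0"
  shows "0 < r^p" "r^p < 1" "r^p = r * r^(p - 1)" "0 < r^(p - 1)" "r^(p - 1) \<le> 1"
    and "- 6 * r^(p - 1) + (r^(p - 1))^2 + 8 * (r^p)^2 + 1 = 0"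
proof -
  show "0 < r^p" "0 < r^(p - 1)" using r by simp_all
  show "r^p < 1" using r p by (simp add: power_less_one_iff)
  show "r^(p - 1) \<le> 1" using r by (simp add: power_le_one)
  show "r^p = r * r^(p - 1)" by (rule power_eq_mult_power_pred[OF p])
  show "- 6 * r^(p - 1) + (r^(p - 1))^2 + 8 * (r^p)^2 + 1 = 0"
    using r(3) unfolding bohr_poly_eq[OF p] .
qed

lemma majorant_le_one_at_bohr_root:
  fixes a :: "nat \<Rightarrow> complex" and f :: "complex \<Rightarrow> complex"
  assumes p: "p \<ge> 1" and holf: "f holomorphic_on ball 0 1"
    and sm: "\<forall>z\<in>ball 0 1. (\<lambda>n. a n * z ^ n) sums f z"
    and sym: "p_symmetric_coeffs p a" and bd: "\<forall>z\<in>ball 0 1. norm (f z) \<le> 1"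
    and R: "0 < R" "R < 1" "bohr_poly p R = 0"
  shows "majorant a R \<le> 1"
proof -
  define b where "b k = a (p * k + 1)" for k
  note b_summable = p_symmetric_factor_bounded(1)[OF p holf sm sym bd, folded b_def]
  note b_bounded = p_symmetric_factor_bounded(2)[OF p holf sm sym bd, folded b_def]
  define A where "A = norm (b 0)"
  define e where "e k = (if k = 0 then 0 else b k)" for k
  define \<beta> where "\<beta> k = norm (e k)" for k
  define X Y where "X = R^p" and "Y = R^(p - 1)"
  note XY = bohr_root_relation[OF p R, folded X_def Y_def]
  have s\<beta>: "summable (\<lambda>k. \<beta> k * s^k)" if "0 \<le> s" "s < 1" for s
    by (rule summable_comparison_test'[OF summable_norm_powser_inside[OF b_summable that]])
      (use that in \<open>auto simp: \<beta>_def e_def\<close>)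
  have head_tail: "(\<Sum>k. (norm (b k))^2 * \<rho>^(2*k)) = A^2 + (\<Sum>k. (\<beta> k)^2 * \<rho>^(2*k))"
    if "0 \<le> \<rho>" "\<rho> < 1" for \<rho>
  proof -
    have "(\<lambda>k. (\<beta> k)^2 * \<rho>^(2*k)) = (\<lambda>k. if k = 0 then 0 else (norm (b k))^2 * \<rho>^(2*k))"
      by (auto simp: \<beta>_def e_def)
    then show ?thesis
      using suminf_eq_head_plus_tail[OF summable_norm_sq_powser[OF that(1)
            summable_norm_powser_inside[OF b_summable that]]]
      by (simp add: A_def)
  qed
  have "(\<lambda>k. norm (b k) * X^k) sums (majorant a R / R)"
    unfolding b_def X_def by (rule majorant_p_symmetric[OF p sym majorant_summable[OF sm] R(1)]) (use R in auto)
  then have "majorant a R = R * (\<Sum>k. norm (b k) * X^k)"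
    using R by (simp add: sums_iff)
  also have "(\<Sum>k. norm (b k) * X^k) = A + (\<Sum>k. \<beta> k * X^k)"
  proof -
    have "(\<lambda>k. \<beta> k * X^k) = (\<lambda>k. if k = 0 then 0 else norm (b k) * X^k)"
      by (auto simp: \<beta>_def e_def)
    then show ?thesis
      using suminf_eq_head_plus_tail[OF summable_norm_powser_inside[OF b_summable, of X]] XY
      by (simp add: A_def)
  qed
  also have "R * (A + (\<Sum>k. \<beta> k * X^k)) \<le> 1"
  proof (rule bohr_inequality_real[OF _ _ s\<beta> _ _ _ _ R(1) XY(1-3,5,6)])
    show "A^2 + (\<Sum>k. (\<beta> k)^2 * \<rho>^(2*k)) \<le> 1" if "0 < \<rho>" "\<rho> < 1" for \<rho>
      using bounded_powser_norm_sq_le[OF b_summable b_bounded that] head_tail that by simp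
    show "(\<Sum>k. (\<beta> k)^2 * \<rho>^(2*k)) \<le> \<rho>^2 * ((1 - A^2)^2 + A^2 * (\<Sum>k. (\<beta> k)^2 * \<rho>^(2*k)))"
      if "A < 1" "0 < \<rho>" "\<rho> < 1" for \<rho>
      using bounded_powser_Schwarz_norm_sq_le[OF b_summable b_bounded _ that(2,3)] that(1)
      unfolding \<beta>_def e_def A_def by simp
  qed (use norm_coeff_zero_le_one[OF b_summable b_bounded] in \<open>auto simp: A_def \<beta>_def e_def\<close>)
  finally show ?thesis .
qed

lemma bohr_inequality_p_symmetric:
  fixes a :: "nat \<Rightarrow> complex" and f :: "complex \<Rightarrow> complex"
  assumes p: "p \<ge> 1" and holf: "f holomorphic_on ball 0 1"
    and sm: "\<forall>z\<in>ball 0 1. (\<lambda>n. a n * z ^ n) sums f z"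
    and sym: "p_symmetric_coeffs p a" and bd: "\<forall>z\<in>ball 0 1. norm (f z) \<le> 1"
    and r: "0 \<le> r" "r \<le> bohr_radius p"
  shows "majorant a r \<le> 1"
proof -
  note rp = bohr_radius_root[OF p]
  have "majorant a r \<le> majorant a (bohr_radius p)"
    using majorant_mono[OF majorant_summable[OF sm]] r rp by auto
  also have "\<dots> \<le> 1" by (rule majorant_le_one_at_bohr_root[OF p holf sm sym bd rp(1-3)])
  finally show ?thesis .
qed

section \<open>The extremal function\<close>

(* Taylor coefficients of the Blaschke factor (w - \<alpha>) / (1 - \<alpha> w). *)
definition blaschke_coeff :: "real \<Rightarrow> nat \<Rightarrow> real" where
  "blaschke_coeff \<alpha> k = (if k = 0 then - \<alpha> else (1 - \<alpha>^2) * \<alpha>^(k - 1))"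

lemma blaschke_coeff_sums:
  fixes w :: "'a::{real_normed_field,banach}"
  assumes "norm (of_real \<alpha> * w) < 1"
  shows "(\<lambda>k. of_real (blaschke_coeff \<alpha> k) * w^k) sums ((w - of_real \<alpha>) / (1 - of_real \<alpha> * w))"
proof -
  have "1 - of_real \<alpha> * w \<noteq> 0" using assms by auto
  have tail: "(\<lambda>k. of_real (blaschke_coeff \<alpha> (Suc k)) * w^(Suc k))
      = (\<lambda>k. (of_real (1 - \<alpha>^2) * w) * (of_real \<alpha> * w)^k)"
    by (simp add: blaschke_coeff_def power_mult_distrib mult_ac)
  have "(\<lambda>k. of_real (blaschke_coeff \<alpha> (Suc k)) * w^(Suc k))
      sums ((of_real (1 - \<alpha>^2) * w) * (1 / (1 - of_real \<alpha> * w)))"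
    unfolding tail by (intro sums_mult geometric_sums assms)
  then have "(\<lambda>k. of_real (blaschke_coeff \<alpha> k) * w^k)
      sums ((of_real (1 - \<alpha>^2) * w) * (1 / (1 - of_real \<alpha> * w)) + of_real (blaschke_coeff \<alpha> 0) * w^0)"
    by (subst (asm) sums_Suc_iff[where f="\<lambda>k. of_real (blaschke_coeff \<alpha> k) * w^k"])
  also have "(of_real (1 - \<alpha>^2) * w) * (1 / (1 - of_real \<alpha> * w)) + of_real (blaschke_coeff \<alpha> 0) * w^0
      = (w - of_real \<alpha>) / (1 - of_real \<alpha> * w)"
    using \<open>1 - of_real \<alpha> * w \<noteq> 0\<close> by (simp add: blaschke_coeff_def field_simps power2_eq_square)
  finally show ?thesis .
qed

lemma blaschke_coeff_abs_sums:
  fixes \<alpha> x :: real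
  assumes "0 \<le> \<alpha>" "\<alpha> \<le> 1" "0 \<le> x" "\<alpha> * x < 1"
  shows "(\<lambda>k. \<bar>blaschke_coeff \<alpha> k\<bar> * x^k) sums (\<alpha> + (1 - \<alpha>^2) * x / (1 - \<alpha> * x))"
proof -
  have terms: "(\<lambda>k. \<bar>blaschke_coeff \<alpha> k\<bar> * x^k)
      = (\<lambda>k. blaschke_coeff \<alpha> k * x^k + (if k = 0 then 2 * \<alpha> * x^k else 0))"
    using assms by (auto simp: blaschke_coeff_def power_le_one)
  have closed_form: "\<alpha> + (1 - \<alpha>^2) * x / (1 - \<alpha> * x) = (x - \<alpha>) / (1 - \<alpha> * x) + 2 * \<alpha> * x^0"
    using assms by (simp add: field_simps power2_eq_square)
  show ?thesis
    unfolding terms closed_form using blaschke_coeff_sums[of \<alpha> x] assms by (intro sums_add sums_single) auto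
qed

(* Taylor coefficients of z (z^p - \<alpha>) / (1 - \<alpha> z^p). *)
definition extremal_coeffs :: "nat \<Rightarrow> real \<Rightarrow> nat \<Rightarrow> complex" where
  "extremal_coeffs p \<alpha> n =
     (if n \<in> range (\<lambda>k. p * k + 1) then of_real (blaschke_coeff \<alpha> ((n - 1) div p)) else 0)"

lemma extremal_coeffs_affine:
  assumes "p \<ge> 1"
  shows "extremal_coeffs p \<alpha> (p * k + 1) = of_real (blaschke_coeff \<alpha> k)"
  using assms by (simp add: extremal_coeffs_def)

lemma p_symmetric_extremal_coeffs: "p_symmetric_coeffs p (extremal_coeffs p \<alpha>)"
  unfolding p_symmetric_coeffs_def extremal_coeffs_def by auto

lemma extremal_coeffs_sums:
  fixes z :: complex
  assumes p: "p \<ge> 1" and \<alpha>: "0 \<le> \<alpha>" "\<alpha> < 1" and z: "norm z < 1"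
  shows "(\<lambda>n. extremal_coeffs p \<alpha> n * z^n) sums (z * (z^p - of_real \<alpha>) / (1 - of_real \<alpha> * z^p))"
proof -
  have "norm (z^p) < 1" using z p by (simp add: norm_power power_less_one_iff)
  then have "\<alpha> * norm (z^p) \<le> \<alpha> * 1" using \<alpha> by (intro mult_left_mono) auto
  then have "norm (of_real \<alpha> * z^p) < 1" using \<alpha> by (simp add: norm_mult)
  then have "(\<lambda>k. z * (of_real (blaschke_coeff \<alpha> k) * (z^p)^k))
      sums (z * ((z^p - of_real \<alpha>) / (1 - of_real \<alpha> * z^p)))"
    by (intro sums_mult blaschke_coeff_sums)
  moreover have "z * (of_real (blaschke_coeff \<alpha> k) * (z^p)^k) = extremal_coeffs p \<alpha> (p * k + 1) * z^(p * k + 1)" for k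
    unfolding extremal_coeffs_affine[OF p] by (simp add: power_add power_mult[symmetric] mult_ac)
  ultimately have "(\<lambda>k. extremal_coeffs p \<alpha> (p * k + 1) * z^(p * k + 1))
      sums (z * (z^p - of_real \<alpha>) / (1 - of_real \<alpha> * z^p))"
    by simp
  then show ?thesis
    by (subst (asm) sums_p_symmetric_iff[OF p])
      (use p_symmetric_coeffs_zero[OF p_symmetric_extremal_coeffs] in auto)
qed

lemma norm_extremal_function_le:
  fixes z :: complex
  assumes p: "p \<ge> 1" and \<alpha>: "0 \<le> \<alpha>" "\<alpha> < 1" and z: "norm z < 1"
  shows "norm (z * (z^p - of_real \<alpha>) / (1 - of_real \<alpha> * z^p)) \<le> 1"
proof -
  have w: "norm (z^p) \<le> 1" using z by (simp add: norm_power power_le_one)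
  then have "norm (z^p - of_real \<alpha>) \<le> norm (1 - of_real \<alpha> * z^p)"
    using norm_diff_le_norm_one_minus_cnj_mult[of "of_real \<alpha>" "z^p"] \<alpha> by simp
  moreover have "\<alpha> * norm (z^p) \<le> \<alpha> * 1" using w \<alpha> by (intro mult_left_mono) auto
  then have "norm (of_real \<alpha> * z^p) < 1" using \<alpha> by (simp add: norm_mult)
  then have "0 < norm (1 - of_real \<alpha> * z^p)"
    using norm_triangle_ineq2[of 1 "of_real \<alpha> * z^p"] norm_one[where 'a=complex] by linarith
  ultimately have "norm ((z^p - of_real \<alpha>) / (1 - of_real \<alpha> * z^p)) \<le> 1"
    by (simp add: norm_divide)
  then have "norm z * norm ((z^p - of_real \<alpha>) / (1 - of_real \<alpha> * z^p)) \<le> 1 * 1"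
    using z by (intro mult_mono) auto
  then show ?thesis by (simp add: norm_mult norm_divide)
qed

lemma majorant_extremal_coeffs:
  assumes p: "p \<ge> 1" and \<alpha>: "0 \<le> \<alpha>" "\<alpha> < 1" and s: "0 < s" "s < 1"
  shows "majorant (extremal_coeffs p \<alpha>) s = s * (\<alpha> + (1 - \<alpha>^2) * s^p / (1 - \<alpha> * s^p))"
proof -
  have summable_s: "summable (\<lambda>n. norm (extremal_coeffs p \<alpha> n) * s^n)"
    by (rule majorant_summable) (use extremal_coeffs_sums[OF p \<alpha>] s in auto)
  have "(\<lambda>k. \<bar>blaschke_coeff \<alpha> k\<bar> * (s^p)^k) sums (majorant (extremal_coeffs p \<alpha>) s / s)"
    using majorant_p_symmetric[OF p p_symmetric_extremal_coeffs summable_s s(1)]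
    unfolding extremal_coeffs_affine[OF p] norm_of_real .
  moreover have "s^p < 1" using s p by (simp add: power_less_one_iff)
  then have "(\<lambda>k. \<bar>blaschke_coeff \<alpha> k\<bar> * (s^p)^k) sums (\<alpha> + (1 - \<alpha>^2) * s^p / (1 - \<alpha> * s^p))"
    using \<alpha> s mult_strict_mono[of \<alpha> 1 "s^p" 1]
    by (intro blaschke_coeff_abs_sums) auto
  ultimately have "majorant (extremal_coeffs p \<alpha>) s / s = \<alpha> + (1 - \<alpha>^2) * s^p / (1 - \<alpha> * s^p)"
    by (rule sums_unique2)
  then show ?thesis using s by (simp add: divide_eq_eq mult.commute)
qed

(* With t = sqrt ((1 - x\<^sup>2) / 2) the relation reads y = 3 - 4 t, and \<alpha> x = 1 - t;
   this is the equality case of bohr_relation_bound. *)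
lemma extremal_parameter:
  fixes r :: real
  assumes p: "p \<ge> 1" and r: "0 < r" "r < 1" "bohr_poly p r = 0" "1/3 < r^p"
  defines "\<alpha> \<equiv> (1 - sqrt (1 - r ^ (2 * p)) / sqrt 2) / r ^ p"
  shows "0 < \<alpha>" "\<alpha> < 1" "r * (\<alpha> + (1 - \<alpha>^2) * r^p / (1 - \<alpha> * r^p)) = 1"
proof -
  define x y t where "x = r^p" and "y = r^(p - 1)" and "t = sqrt (1 - x^2) / sqrt 2"
  note xy = bohr_root_relation[OF p r(1-3), folded x_def y_def]
  have x: "0 < x" "x < 1" "1/3 < x" using xy r(4) unfolding x_def by auto
  have "x^2 < 1" using x by (simp add: power_less_one_iff)
  then have t2: "t^2 = (1 - x^2) / 2" and t0: "0 < t" unfolding t_def by (simp_all add: power_divide)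
  have "(3 - y)^2 = (4 * t)^2" using xy(6) t2 by (simp add: power2_eq_square algebra_simps)
  then have "3 - y = 4 * t" by (rule power2_eq_imp_eq) (use xy(5) t0 in auto)
  then have yt: "y = 3 - 4 * t" by simp
  have "\<alpha> = (1 - t) / x"
    unfolding \<alpha>_def t_def x_def by (simp add: power_mult[symmetric] mult.commute)
  then have \<alpha>x: "\<alpha> * x = 1 - t" using x by simp
  have "2 * t^2 = 1 - x^2" using t2 by simp
  then have "t^2 < 1" using zero_le_power2[of x] by linarith
  then have "t < 1" using t0 by (metis abs_of_pos abs_square_less_1)
  then show "0 < \<alpha>" using \<open>\<alpha> = (1 - t) / x\<close> x by simp
  have "t^2 - (1 - x)^2 = (1 - x) * (3 * x - 1) / 2" unfolding t2 by (simp add: power2_eq_square field_simps)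
  moreover have "0 < (1 - x) * (3 * x - 1)" using x by (intro mult_pos_pos) auto
  ultimately have "(1 - x)^2 < t^2" by simp
  then have "1 - x < t" by (rule power2_less_imp_less) (use t0 in simp)
  then show "\<alpha> < 1" using \<open>\<alpha> = (1 - t) / x\<close> x by (simp add: divide_less_eq)
  have "\<alpha> + (1 - \<alpha>^2) * x / (1 - \<alpha> * x) = \<alpha> + (1 - \<alpha>^2) * x / t"
    using \<alpha>x by simp
  also have "\<dots> = (\<alpha> * x * t + (x^2 - (\<alpha> * x)^2)) / (x * t)"
    using x t0 by (simp add: field_simps power2_eq_square)
  also have "\<alpha> * x * t + (x^2 - (\<alpha> * x)^2) = (1 - t) * t + x^2 - (1 - t)^2"
    by (simp only: \<alpha>x)
  also have "\<dots> = y * t"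
    using t2 unfolding yt by (simp add: power2_eq_square algebra_simps)
  finally show "r * (\<alpha> + (1 - \<alpha>^2) * r^p / (1 - \<alpha> * r^p)) = 1"
    unfolding x_def[symmetric] using xy(3,4) x t0 r by simp
qed

lemma extremal_majorant_strict_mono:
  fixes r s \<alpha> :: real
  assumes p: "p \<ge> 1" and \<alpha>: "0 \<le> \<alpha>" "\<alpha> < 1" and rs: "0 < r" "r < s" "s < 1"
  shows "r * (\<alpha> + (1 - \<alpha>^2) * r^p / (1 - \<alpha> * r^p)) < s * (\<alpha> + (1 - \<alpha>^2) * s^p / (1 - \<alpha> * s^p))"
proof -
  have x: "0 < r^p" "r^p < s^p" "s^p < 1"
    using rs p by (auto intro: power_strict_mono simp: power_less_one_iff)
  have "\<alpha> * r^p \<le> \<alpha> * s^p" "\<alpha> * s^p < 1"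
    using x \<alpha> mult_strict_mono[of \<alpha> 1 "s^p" 1] by (auto intro: mult_left_mono)
  then have "r^p / (1 - \<alpha> * r^p) \<le> s^p / (1 - \<alpha> * s^p)"
    using x by (intro frac_le) auto
  moreover have "0 < 1 - \<alpha>^2" using \<alpha> by (simp add: power_less_one_iff)
  ultimately have "(1 - \<alpha>^2) * (r^p / (1 - \<alpha> * r^p)) \<le> (1 - \<alpha>^2) * (s^p / (1 - \<alpha> * s^p))"
    by (intro mult_left_mono) auto
  then have inner: "\<alpha> + (1 - \<alpha>^2) * r^p / (1 - \<alpha> * r^p) \<le> \<alpha> + (1 - \<alpha>^2) * s^p / (1 - \<alpha> * s^p)"
    by simp
  have "0 < (1 - \<alpha>^2) * r^p / (1 - \<alpha> * r^p)"
    using \<open>0 < 1 - \<alpha>^2\<close> x \<open>\<alpha> * r^p \<le> \<alpha> * s^p\<close> \<open>\<alpha> * s^p < 1\<close> by simp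
  then have pos: "0 < \<alpha> + (1 - \<alpha>^2) * r^p / (1 - \<alpha> * r^p)" using \<alpha> by linarith
  show ?thesis by (rule mult_less_le_imp_less[OF rs(2) inner]) (use rs pos in auto)
qed

lemma bohr_radius_sharp:
  assumes p: "p \<ge> 1"
  defines "\<alpha> \<equiv> (1 - sqrt (1 - bohr_radius p ^ (2 * p)) / sqrt 2) / bohr_radius p ^ p"
  shows "0 \<le> \<alpha>" "\<alpha> < 1"
    and "majorant (extremal_coeffs p \<alpha>) (bohr_radius p) \<le> 1"
    and "\<And>r. bohr_radius p < r \<Longrightarrow> r < 1 \<Longrightarrow> 1 < majorant (extremal_coeffs p \<alpha>) r"
proof -
  note rp = bohr_radius_root[OF p]
  note \<alpha> = extremal_parameter[OF p rp, folded \<alpha>_def]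
  show \<alpha>': "0 \<le> \<alpha>" "\<alpha> < 1" using \<alpha> by auto
  show "majorant (extremal_coeffs p \<alpha>) (bohr_radius p) \<le> 1"
    using majorant_extremal_coeffs[OF p \<alpha>' rp(1,2)] \<alpha>(3) by simp
  show "1 < majorant (extremal_coeffs p \<alpha>) r" if "bohr_radius p < r" "r < 1" for r
    using majorant_extremal_coeffs[OF p \<alpha>', of r] \<alpha>(3) that rp(1)
      extremal_majorant_strict_mono[OF p \<alpha>' rp(1), of r] by simp
qed

theorem theorem1:
  fixes p :: nat
  assumes "p \<ge> 1"
  shows "(\<forall>(f :: complex \<Rightarrow> complex) (a :: nat \<Rightarrow> complex).
            f holomorphic_on ball 0 1 \<longrightarrow>
            (\<forall>z\<in>ball 0 1. (\<lambda>n. a n * z ^ n) sums f z) \<longrightarrow>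
            p_symmetric_coeffs p a \<longrightarrow>
            (\<forall>z\<in>ball 0 1. norm (f z) \<le> 1) \<longrightarrow>
            (\<forall>r. 0 \<le> r \<and> r \<le> bohr_radius p \<longrightarrow> majorant a r \<le> 1))
       \<and> (let rp = bohr_radius p;
              \<alpha> = (1 - sqrt (1 - rp ^ (2 * p)) / sqrt 2) / rp ^ p;
              g = (\<lambda>z::complex. z * (z ^ p - complex_of_real \<alpha>) / (1 - complex_of_real \<alpha> * z ^ p))
          in \<exists>c :: nat \<Rightarrow> complex.
               (\<forall>z\<in>ball 0 1. (\<lambda>n. c n * z ^ n) sums g z) \<and>
               p_symmetric_coeffs p c \<and>
               (\<forall>z\<in>ball 0 1. norm (g z) \<le> 1) \<and>
               majorant c rp \<le> 1 \<and>
               (\<forall>r. rp < r \<and> r < 1 \<longrightarrow> majorant c r > 1))"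
proof -
  define \<alpha> where "\<alpha> = (1 - sqrt (1 - bohr_radius p ^ (2 * p)) / sqrt 2) / bohr_radius p ^ p"
  note sharp = bohr_radius_sharp[OF assms, folded \<alpha>_def]
  show ?thesis
    unfolding Let_def \<alpha>_def[symmetric]
    using bohr_inequality_p_symmetric[OF assms] sharp p_symmetric_extremal_coeffs
      extremal_coeffs_sums[OF assms sharp(1,2)] norm_extremal_function_le[OF assms sharp(1,2)]
    by (intro conjI allI impI ballI exI[of _ "extremal_coeffs p \<alpha>"]) auto
qed

end
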